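(* $D(19,\{3,4\})\ge 33$; equivalently, every $\{K_3,K_4\}$-decomposition of $K_{19}$ has $\alpha\ge 9$.
   Context: A $\{K_3,K_4\}$-decomposition of $K_v$ is a collection of subgraphs, each isomorphic to $K_3$ or $K_4$, such that every edge of $K_v$ lies in exactly one of them. $\alpha$ and $\beta$ denote the numbers of copies of $K_3$ and $K_4$ in the decomposition (so $3\alpha+6\beta=\binom{v}{2}$). $D(v,\{3,4\})$ is the minimum of $\alpha+\beta$ over all such decompositions of $K_v$. *)

theory Defs
  imports Main
begin

text \<open>A {K3,K4}-decomposition of the complete graph on vertex set V: a collection B of
  vertex subsets (the vertex sets of the K3 / K4 copies), each of size 3 or 4 and contained
  in V, such that every edge {x,y} (x \<noteq> y in V) lies in exactly one block.\<close>
definition K34_decomposition :: "'a set \<Rightarrow> 'a set set \<Rightarrow> bool" where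
  "K34_decomposition V B \<longleftrightarrow>
     (\<forall>b\<in>B. b \<subseteq> V \<and> (card b = 3 \<or> card b = 4)) \<and>
     (\<forall>x\<in>V. \<forall>y\<in>V. x \<noteq> y \<longrightarrow> (\<exists>!b. b \<in> B \<and> x \<in> b \<and> y \<in> b))"

definition num_K3 :: "'a set set \<Rightarrow> nat" where
  "num_K3 B = card {b\<in>B. card b = 3}"

definition num_K4 :: "'a set set \<Rightarrow> nat" where
  "num_K4 B = card {b\<in>B. card b = 4}"

end

theory Submission
  imports Defs
begin

text \<open>Counting the edges of \<open>K\<^sub>v\<close> gives \<open>\<alpha> + 2\<beta> = v(v-1)/6\<close>, which for \<open>v = 19\<close> is \<open>57\<close>;
  so \<open>\<alpha>\<close> is odd and \<open>\<alpha> + \<beta> \<ge> 33\<close> is equivalent to \<open>\<alpha> \<ge> 9\<close>. At a vertex lying on \<open>s\<close>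
  triangles and \<open>r\<close> copies of \<open>K\<^sub>4\<close> we have \<open>2s + 3r = v - 1\<close>, so \<open>3\<close> divides \<open>s\<close> when \<open>3\<close>
  divides \<open>v - 1\<close>. Hence every vertex on a triangle lies on at least three of them, and the
  triangles alone connect it to at least six other such vertices. So at least \<open>7\<close> vertices
  lie on triangles, and summing \<open>s\<close> over them gives \<open>3\<alpha> \<ge> 3 \<cdot> 7\<close>. If \<open>\<alpha> = 7\<close>, the
  triangles form a Fano plane on exactly \<open>7\<close> vertices, each of which then lies on \<open>(v - 7)/3\<close>
  copies of \<open>K\<^sub>4\<close>; these are pairwise distinct because two vertices of the Fano plane already
  share a triangle. For \<open>v = 19\<close> this gives \<open>\<beta> \<ge> 28\<close>, contradicting \<open>\<beta> = (57 - 7)/2 = 25\<close>.\<close>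

definition triangles_at :: "'a set set \<Rightarrow> 'a \<Rightarrow> 'a set set" where
  "triangles_at B x = {b \<in> B. x \<in> b \<and> card b = 3}"

definition quads_at :: "'a set set \<Rightarrow> 'a \<Rightarrow> 'a set set" where
  "quads_at B x = {b \<in> B. x \<in> b \<and> card b = 4}"

definition triangle_support :: "'a set set \<Rightarrow> 'a set" where
  "triangle_support B = \<Union>{b \<in> B. card b = 3}"

lemma sum_card_3_4:
  assumes "finite A" "\<forall>b\<in>A. card b = 3 \<or> card b = 4"
  shows "(\<Sum>b\<in>A. g (card b)) = g 3 * card {b\<in>A. card b = 3} + g 4 * card {b\<in>A. card b = 4}"
proof -
  have "(\<Sum>b\<in>A. g (card b)) = (\<Sum>b\<in>A. if card b = 3 then g 3 else g 4)"
    by (rule sum.cong) (use assms in auto)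
  also have "\<dots> = sum (\<lambda>_. g 3) (A \<inter> {b. card b = 3}) + sum (\<lambda>_. g 4) (A \<inter> - {b. card b = 3})"
    by (rule sum.If_cases[OF assms(1)])
  also have "A \<inter> {b. card b = 3} = {b\<in>A. card b = 3}" by auto
  also have "A \<inter> - {b. card b = 3} = {b\<in>A. card b = 4}" using assms by auto
  finally show ?thesis by simp
qed

locale finite_K34_decomposition =
  fixes V :: "'a set" and B :: "'a set set"
  assumes finite_vertices: "finite V"
    and decomposition: "K34_decomposition V B"
begin

lemma block_subset: "b \<in> B \<Longrightarrow> b \<subseteq> V"
  and block_card: "b \<in> B \<Longrightarrow> card b = 3 \<or> card b = 4"
  using decomposition unfolding K34_decomposition_def by auto

lemma finite_block: "b \<in> B \<Longrightarrow> finite b"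
  using block_subset finite_vertices finite_subset by blast

lemma finite_blocks: "finite B"
proof -
  have "B \<subseteq> Pow V"
    using block_subset by blast
  then show ?thesis
    using finite_vertices by (simp add: finite_subset)
qed

lemma block_unique:
  assumes "b \<in> B" "b' \<in> B" "x \<in> b" "x \<in> b'" "y \<in> b" "y \<in> b'" "x \<noteq> y"
  shows "b = b'"
proof -
  have "x \<in> V" "y \<in> V" using assms block_subset by auto
  then have "\<exists>!b. b \<in> B \<and> x \<in> b \<and> y \<in> b"
    using decomposition \<open>x \<noteq> y\<close> unfolding K34_decomposition_def by blast
  then show ?thesis using assms by blast
qed

lemma block_through:
  assumes "x \<in> V" "y \<in> V" "x \<noteq> y"
  obtains b where "b \<in> B" "x \<in> b" "y \<in> b"
  using assms decomposition unfolding K34_decomposition_def by blast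

lemma card_UN_blocks_through:
  assumes "C \<subseteq> {b\<in>B. x \<in> b}"
  shows "card (\<Union>b\<in>C. b - {x}) = (\<Sum>b\<in>C. card b - 1)"
proof -
  have blocks: "b \<in> B" "x \<in> b" "finite b" if "b \<in> C" for b
    using that assms finite_block by auto
  have "finite C"
    by (rule finite_subset[OF _ finite_blocks]) (use assms in blast)
  moreover have "\<forall>b\<in>C. finite (b - {x})"
    using blocks by blast
  moreover have "(b - {x}) \<inter> (b' - {x}) = {}" if "b \<in> C" "b' \<in> C" "b \<noteq> b'" for b b'
  proof -
    have "y \<notin> b'" if "y \<in> b" "y \<noteq> x" for y
      using block_unique[of b b' x y] blocks[OF \<open>b \<in> C\<close>] blocks[OF \<open>b' \<in> C\<close>] \<open>b \<noteq> b'\<close> that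
      by blast
    then show ?thesis by blast
  qed
  ultimately have "card (\<Union>b\<in>C. b - {x}) = (\<Sum>b\<in>C. card (b - {x}))"
    by (intro card_UN_disjoint) blast+
  also have "\<dots> = (\<Sum>b\<in>C. card b - 1)"
    using blocks by (intro sum.cong) simp_all
  finally show ?thesis .
qed

lemma sum_blocks_through:
  assumes "x \<in> V"
  shows "(\<Sum>b\<in>{b\<in>B. x \<in> b}. card b - 1) = card V - 1"
proof -
  have covered: "V - {x} \<subseteq> (\<Union>b\<in>{b\<in>B. x \<in> b}. b - {x})"
  proof
    fix y
    assume "y \<in> V - {x}"
    then obtain b where "b \<in> B" "x \<in> b" "y \<in> b"
      using block_through[OF assms] by blast
    with \<open>y \<in> V - {x}\<close> show "y \<in> (\<Union>b\<in>{b\<in>B. x \<in> b}. b - {x})"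
      by blast
  qed
  have "card V - 1 = card (V - {x})"
    using assms finite_vertices by simp
  also have "V - {x} = (\<Union>b\<in>{b\<in>B. x \<in> b}. b - {x})"
    using covered block_subset by blast
  also have "card \<dots> = (\<Sum>b\<in>{b\<in>B. x \<in> b}. card b - 1)"
    by (rule card_UN_blocks_through) simp
  finally show ?thesis ..
qed

lemma sum_sum_blocks_through:
  "(\<Sum>x\<in>V. \<Sum>b\<in>{b\<in>B. x \<in> b}. f b) = (\<Sum>b\<in>B. card b * f b)"
proof -
  have "(\<Sum>x\<in>V. \<Sum>b\<in>{b\<in>B. x \<in> b}. f b) = (\<Sum>b\<in>B. \<Sum>x\<in>{x\<in>V. x \<in> b}. f b)"
    by (rule sum.swap_restrict[OF finite_vertices finite_blocks])
  also have "\<dots> = (\<Sum>b\<in>B. card b * f b)"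
  proof (rule sum.cong)
    fix b assume "b \<in> B"
    then have "{x\<in>V. x \<in> b} = b" using block_subset by blast
    then show "(\<Sum>x\<in>{x\<in>V. x \<in> b}. f b) = card b * f b" by simp
  qed simp
  finally show ?thesis .
qed

lemma degree_equation:
  assumes "x \<in> V"
  shows "2 * card (triangles_at B x) + 3 * card (quads_at B x) = card V - 1"
proof -
  have "(\<Sum>b\<in>{b\<in>B. x \<in> b}. card b - 1) =
      (3 - 1) * card {b\<in>{b\<in>B. x \<in> b}. card b = 3} + (4 - 1) * card {b\<in>{b\<in>B. x \<in> b}. card b = 4}"
    using finite_blocks block_card by (intro sum_card_3_4[where g = "\<lambda>n. n - 1"]) auto
  also have "{b\<in>{b\<in>B. x \<in> b}. card b = 3} = triangles_at B x"
    by (auto simp: triangles_at_def)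
  also have "{b\<in>{b\<in>B. x \<in> b}. card b = 4} = quads_at B x"
    by (auto simp: quads_at_def)
  finally show ?thesis
    using sum_blocks_through[OF assms] by simp
qed

lemma edge_count: "6 * num_K3 B + 12 * num_K4 B = card V * (card V - 1)"
proof -
  have "(\<Sum>b\<in>B. card b * (card b - 1)) = (\<Sum>x\<in>V. card V - 1)"
    using sum_blocks_through by (simp add: sum_sum_blocks_through[symmetric])
  moreover have "(\<Sum>b\<in>B. card b * (card b - 1)) = (3 * (3 - 1)) * num_K3 B + (4 * (4 - 1)) * num_K4 B"
    using sum_card_3_4[OF finite_blocks, where g = "\<lambda>n. n * (n - 1)"] block_card
    by (simp add: num_K3_def num_K4_def)
  ultimately show ?thesis by simp
qed

lemma sum_card_triangles_at: "(\<Sum>x\<in>V. card (triangles_at B x)) = 3 * num_K3 B"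
proof -
  have "card (triangles_at B x) = (\<Sum>b\<in>{b\<in>B. x \<in> b}. of_bool (card b = 3))" for x
  proof -
    have "triangles_at B x = {b \<in> {b\<in>B. x \<in> b}. card b = 3}"
      by (auto simp: triangles_at_def)
    then show ?thesis
      using finite_blocks by (simp add: Int_def conj_assoc)
  qed
  then have "(\<Sum>x\<in>V. card (triangles_at B x)) = (\<Sum>b\<in>B. card b * of_bool (card b = 3))"
    by (simp only: sum_sum_blocks_through)
  also have "\<dots> = 3 * num_K3 B"
    using sum_card_3_4[OF finite_blocks, where g = "\<lambda>n. n * of_bool (n = 3)"] block_card
    by (simp add: num_K3_def)
  finally show ?thesis .
qed

lemma triangle_support_subset: "triangle_support B \<subseteq> V"
  using block_subset by (auto simp: triangle_support_def)

lemma triangle_support_iff: "x \<in> triangle_support B \<longleftrightarrow> triangles_at B x \<noteq> {}"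
  by (auto simp: triangle_support_def triangles_at_def)

lemma finite_triangles_at: "finite (triangles_at B x)"
  using finite_blocks by (simp add: triangles_at_def)

lemma finite_quads_at: "finite (quads_at B x)"
  using finite_blocks by (simp add: quads_at_def)

lemma finite_triangle_support: "finite (triangle_support B)"
  using triangle_support_subset finite_vertices finite_subset by blast

lemma card_triangle_link:
  "card (\<Union>b\<in>triangles_at B x. b - {x}) = 2 * card (triangles_at B x)"
proof -
  have "card (\<Union>b\<in>triangles_at B x. b - {x}) = (\<Sum>b\<in>triangles_at B x. card b - 1)"
    by (rule card_UN_blocks_through) (auto simp: triangles_at_def)
  also have "\<dots> = (\<Sum>b\<in>triangles_at B x. 2)"
    by (rule sum.cong) (auto simp: triangles_at_def)
  finally show ?thesis by simp
qed

lemma triangle_link_subset: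
  "(\<Union>b\<in>triangles_at B x. b - {x}) \<subseteq> triangle_support B - {x}"
  by (auto simp: triangle_support_def triangles_at_def)

lemma card_triangles_at_le:
  assumes "x \<in> triangle_support B"
  shows "2 * card (triangles_at B x) \<le> card (triangle_support B) - 1"
proof -
  have "card (\<Union>b\<in>triangles_at B x. b - {x}) \<le> card (triangle_support B - {x})"
    using finite_triangle_support triangle_link_subset by (intro card_mono) auto
  then show ?thesis
    using card_triangle_link assms by simp
qed

lemma sum_card_triangles_at_support:
  "(\<Sum>x\<in>triangle_support B. card (triangles_at B x)) = 3 * num_K3 B"
proof -
  have "(\<Sum>x\<in>triangle_support B. card (triangles_at B x)) = (\<Sum>x\<in>V. card (triangles_at B x))"
    using triangle_support_subset triangle_support_iff finite_vertices
    by (intro sum.mono_neutral_left) auto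
  then show ?thesis
    using sum_card_triangles_at by simp
qed

context
  assumes three_dvd: "3 dvd card V - 1"
begin

lemma card_triangles_at_ge_3:
  assumes "x \<in> triangle_support B"
  shows "card (triangles_at B x) \<ge> 3"
proof -
  have "x \<in> V"
    using assms triangle_support_subset by blast
  then have "2 * card (triangles_at B x) + 3 * card (quads_at B x) = card V - 1"
    by (rule degree_equation)
  moreover have "card (triangles_at B x) \<noteq> 0"
    using assms triangle_support_iff finite_triangles_at by simp
  ultimately show ?thesis
    using three_dvd by presburger
qed

lemma card_triangle_support_le: "card (triangle_support B) \<le> num_K3 B"
proof -
  have "(\<Sum>x\<in>triangle_support B. 3) \<le> (\<Sum>x\<in>triangle_support B. card (triangles_at B x))"
    using card_triangles_at_ge_3 by (rule sum_mono)
  then show ?thesis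
    using sum_card_triangles_at_support by simp
qed

lemma card_triangle_support_ge_7:
  assumes "num_K3 B \<noteq> 0"
  shows "card (triangle_support B) \<ge> 7"
proof -
  have "{b\<in>B. card b = 3} \<noteq> {}"
    using assms unfolding num_K3_def by (metis card.empty)
  then obtain b where "b \<in> B" "card b = 3"
    by blast
  then obtain x where "x \<in> b"
    by (metis card.empty ex_in_conv zero_neq_numeral)
  with \<open>b \<in> B\<close> \<open>card b = 3\<close> have "x \<in> triangle_support B"
    by (auto simp: triangle_support_def)
  then show ?thesis
    using card_triangles_at_le card_triangles_at_ge_3 by fastforce
qed

lemma num_K3_ge_7: "num_K3 B \<noteq> 0 \<Longrightarrow> num_K3 B \<ge> 7"
  using card_triangle_support_ge_7 card_triangle_support_le by fastforce

context
  assumes seven_triangles: "num_K3 B = 7"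
begin

lemma card_triangle_support_eq_7: "card (triangle_support B) = 7"
  using card_triangle_support_ge_7 card_triangle_support_le seven_triangles by simp

lemma card_triangles_at_eq_3:
  assumes "x \<in> triangle_support B"
  shows "card (triangles_at B x) = 3"
proof (rule ccontr)
  assume "card (triangles_at B x) \<noteq> 3"
  then have "card (triangles_at B x) > 3"
    using card_triangles_at_ge_3[OF assms] by simp
  have "(\<Sum>y\<in>triangle_support B. 3) < (\<Sum>y\<in>triangle_support B. card (triangles_at B y))"
  proof (rule sum_strict_mono_ex1[OF finite_triangle_support])
    show "\<forall>y\<in>triangle_support B. 3 \<le> card (triangles_at B y)"
      using card_triangles_at_ge_3 by blast
    show "\<exists>y\<in>triangle_support B. 3 < card (triangles_at B y)"
      using assms \<open>card (triangles_at B x) > 3\<close> by blast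
  qed
  then show False
    using sum_card_triangles_at_support card_triangle_support_eq_7 seven_triangles by simp
qed

lemma fano_pair:
  assumes "x \<in> triangle_support B" "y \<in> triangle_support B" "x \<noteq> y"
  obtains b where "b \<in> B" "card b = 3" "x \<in> b" "y \<in> b"
proof -
  have "card (\<Union>b\<in>triangles_at B x. b - {x}) = card (triangle_support B - {x})"
    using card_triangle_link card_triangles_at_eq_3 card_triangle_support_eq_7 assms(1) by simp
  then have "(\<Union>b\<in>triangles_at B x. b - {x}) = triangle_support B - {x}"
    using triangle_link_subset finite_triangle_support by (simp add: card_subset_eq)
  then have "y \<in> (\<Union>b\<in>triangles_at B x. b - {x})"
    using assms(2,3) by simp
  then show ?thesis
    using that by (auto simp: triangles_at_def)
qed

lemma quads_at_disjoint:
  assumes "x \<in> triangle_support B" "y \<in> triangle_support B" "x \<noteq> y"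
  shows "quads_at B x \<inter> quads_at B y = {}"
proof -
  obtain t where t: "t \<in> B" "card t = 3" "x \<in> t" "y \<in> t"
    using fano_pair assms .
  have "b \<notin> quads_at B y" if "b \<in> quads_at B x" for b
  proof
    assume "b \<in> quads_at B y"
    with that have "b \<in> B" "x \<in> b" "y \<in> b" "card b = 4"
      by (auto simp: quads_at_def)
    with t block_unique[of b t x y] assms(3) show False
      by simp
  qed
  then show ?thesis by blast
qed

lemma num_K4_lower_bound: "7 * (card V - 7) \<le> 3 * num_K4 B"
proof -
  let ?T = "triangle_support B"
  have "3 * card (quads_at B x) = card V - 7" if "x \<in> ?T" for x
    using degree_equation[of x] card_triangles_at_eq_3[OF that] that triangle_support_subset by auto
  then have "7 * (card V - 7) = 3 * (\<Sum>x\<in>?T. card (quads_at B x))"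
    using card_triangle_support_eq_7 by (simp add: sum_distrib_left)
  also have "(\<Sum>x\<in>?T. card (quads_at B x)) = card (\<Union>x\<in>?T. quads_at B x)"
    using finite_triangle_support finite_quads_at quads_at_disjoint
    by (intro card_UN_disjoint[symmetric]) blast+
  also have "\<dots> \<le> num_K4 B"
    unfolding num_K4_def quads_at_def using finite_blocks by (intro card_mono) auto
  finally show ?thesis by simp
qed

end

end

end

theorem mainTheorem19:
  fixes B :: "nat set set"
  assumes "K34_decomposition {0..<19} B"
  shows "num_K3 B + num_K4 B \<ge> 33 \<and> num_K3 B \<ge> 9"
proof -
  interpret finite_K34_decomposition "{0..<19::nat}" B
    using assms by unfold_locales simp
  have three_dvd: "3 dvd card {0..<19::nat} - 1"
    by simp
  have edges: "6 * num_K3 B + 12 * num_K4 B = 342"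
    using edge_count by simp
  have "num_K3 B \<ge> 9"
  proof (rule ccontr)
    assume "\<not> num_K3 B \<ge> 9"
    moreover have "odd (num_K3 B)"
      using edges by presburger
    moreover from \<open>odd (num_K3 B)\<close> have "num_K3 B \<ge> 7"
      using num_K3_ge_7[OF three_dvd] by (metis odd_pos less_irrefl)
    ultimately have "num_K3 B = 7"
      by presburger
    then have "28 \<le> num_K4 B"
      using num_K4_lower_bound[OF three_dvd] by simp
    then show False
      using edges \<open>num_K3 B = 7\<close> by simp
  qed
  then show ?thesis
    using edges by simp
qed

end
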